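(* Let $\mathcal{A},\mathcal{A}'$ be abelian categories with amplitudes $\alpha,\alpha'$, and let $F\colon\mathcal{A}\to\mathcal{A}'$ be an additive functor for which there exists $K\ge0$ such that $\mathrm{d}_{\alpha'}(F(A),F(B))\le K\,\mathrm{d}_\alpha(A,B)$ for all $A,B\in\operatorname{ob}\mathcal{A}$. Then $\alpha'(F(A))\le K\alpha(A)$ for all $A\in\operatorname{ob}\mathcal{A}$.
   Context: An amplitude on an abelian category $\mathcal{A}$ is a function $\alpha\colon\operatorname{ob}\mathcal{A}\to[0,\infty]$ with $\alpha(0)=0$ such that for every short exact sequence $0\to A\to B\to C\to0$, $\alpha(A)\le\alpha(B)$, $\alpha(C)\le\alpha(B)$ and $\alpha(B)\le\alpha(A)+\alpha(C)$. The path metric $\mathrm{d}_\alpha(A,B)$ is the infimum, over zigzags $A\xleftarrow{\gamma_1}C_1\xrightarrow{\gamma_2}\cdots\xrightarrow{\gamma_n}B$, of $\sum_i\alpha(\ker\gamma_i)+\alpha(\operatorname{coker}\gamma_i)$ ($\inf\emptyset=\infty$). *)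

theory Defs
  imports Complex_Main "HOL-Library.Extended_Nonnegative_Real"
begin

text \<open>A category is given by a set of objects, hom-sets, composition
  (Comp A B C g f = g o f for f : A -> B, g : B -> C), identities, and the
  additive structure on hom-sets: Add A B f g = f + g, Zro A B = zero morphism.\<close>

record ('o, 'm) acat =
  Obj  :: "'o set"
  Hom  :: "'o \<Rightarrow> 'o \<Rightarrow> 'm set"
  Comp :: "'o \<Rightarrow> 'o \<Rightarrow> 'o \<Rightarrow> 'm \<Rightarrow> 'm \<Rightarrow> 'm"
  Idm  :: "'o \<Rightarrow> 'm"
  Add  :: "'o \<Rightarrow> 'o \<Rightarrow> 'm \<Rightarrow> 'm \<Rightarrow> 'm"
  Zro  :: "'o \<Rightarrow> 'o \<Rightarrow> 'm"

definition is_category :: "('o, 'm) acat \<Rightarrow> bool" where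
  "is_category C \<longleftrightarrow>
     (\<forall>A\<in>Obj C. Idm C A \<in> Hom C A A) \<and>
     (\<forall>A\<in>Obj C. \<forall>B\<in>Obj C. \<forall>D\<in>Obj C. \<forall>f\<in>Hom C A B. \<forall>g\<in>Hom C B D.
        Comp C A B D g f \<in> Hom C A D) \<and>
     (\<forall>A\<in>Obj C. \<forall>B\<in>Obj C. \<forall>f\<in>Hom C A B.
        Comp C A B B (Idm C B) f = f \<and> Comp C A A B f (Idm C A) = f) \<and>
     (\<forall>A\<in>Obj C. \<forall>B\<in>Obj C. \<forall>D\<in>Obj C. \<forall>E\<in>Obj C.
        \<forall>f\<in>Hom C A B. \<forall>g\<in>Hom C B D. \<forall>h\<in>Hom C D E.
        Comp C A D E h (Comp C A B D g f) = Comp C A B E (Comp C B D E h g) f)"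

definition is_preadditive :: "('o, 'm) acat \<Rightarrow> bool" where
  "is_preadditive C \<longleftrightarrow>
     (\<forall>A\<in>Obj C. \<forall>B\<in>Obj C.
        Zro C A B \<in> Hom C A B \<and>
        (\<forall>f\<in>Hom C A B. \<forall>g\<in>Hom C A B. Add C A B f g \<in> Hom C A B) \<and>
        (\<forall>f\<in>Hom C A B. \<forall>g\<in>Hom C A B. \<forall>h\<in>Hom C A B.
           Add C A B (Add C A B f g) h = Add C A B f (Add C A B g h)) \<and>
        (\<forall>f\<in>Hom C A B. \<forall>g\<in>Hom C A B. Add C A B f g = Add C A B g f) \<and>
        (\<forall>f\<in>Hom C A B. Add C A B f (Zro C A B) = f) \<and>
        (\<forall>f\<in>Hom C A B. \<exists>g\<in>Hom C A B. Add C A B f g = Zro C A B)) \<and>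
     (\<forall>A\<in>Obj C. \<forall>B\<in>Obj C. \<forall>D\<in>Obj C.
        \<forall>f\<in>Hom C A B. \<forall>f'\<in>Hom C A B. \<forall>g\<in>Hom C B D. \<forall>g'\<in>Hom C B D.
          Comp C A B D g (Add C A B f f') = Add C A D (Comp C A B D g f) (Comp C A B D g f') \<and>
          Comp C A B D (Add C B D g g') f = Add C A D (Comp C A B D g f) (Comp C A B D g' f))"

definition is_zero_obj :: "('o, 'm) acat \<Rightarrow> 'o \<Rightarrow> bool" where
  "is_zero_obj C Z \<longleftrightarrow> Z \<in> Obj C \<and>
     (\<forall>A\<in>Obj C. Hom C Z A = {Zro C Z A} \<and> Hom C A Z = {Zro C A Z})"

definition has_biproducts :: "('o, 'm) acat \<Rightarrow> bool" where
  "has_biproducts C \<longleftrightarrow>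
     (\<forall>A\<in>Obj C. \<forall>B\<in>Obj C. \<exists>P\<in>Obj C.
        \<exists>i1\<in>Hom C A P. \<exists>i2\<in>Hom C B P. \<exists>p1\<in>Hom C P A. \<exists>p2\<in>Hom C P B.
          Comp C A P A p1 i1 = Idm C A \<and> Comp C B P B p2 i2 = Idm C B \<and>
          Comp C B P A p1 i2 = Zro C B A \<and> Comp C A P B p2 i1 = Zro C A B \<and>
          Add C P P (Comp C P A P i1 p1) (Comp C P B P i2 p2) = Idm C P)"

definition is_kernel :: "('o, 'm) acat \<Rightarrow> 'o \<Rightarrow> 'o \<Rightarrow> 'm \<Rightarrow> 'o \<Rightarrow> 'm \<Rightarrow> bool" where
  "is_kernel C A B f K k \<longleftrightarrow> K \<in> Obj C \<and> k \<in> Hom C K A \<and>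
     Comp C K A B f k = Zro C K B \<and>
     (\<forall>X\<in>Obj C. \<forall>g\<in>Hom C X A. Comp C X A B f g = Zro C X B \<longrightarrow>
        (\<exists>!u. u \<in> Hom C X K \<and> Comp C X K A k u = g))"

definition is_cokernel :: "('o, 'm) acat \<Rightarrow> 'o \<Rightarrow> 'o \<Rightarrow> 'm \<Rightarrow> 'o \<Rightarrow> 'm \<Rightarrow> bool" where
  "is_cokernel C A B f Q q \<longleftrightarrow> Q \<in> Obj C \<and> q \<in> Hom C B Q \<and>
     Comp C A B Q q f = Zro C A Q \<and>
     (\<forall>X\<in>Obj C. \<forall>g\<in>Hom C B X. Comp C A B X g f = Zro C A X \<longrightarrow>
        (\<exists>!u. u \<in> Hom C Q X \<and> Comp C B Q X u q = g))"

definition is_mono :: "('o, 'm) acat \<Rightarrow> 'o \<Rightarrow> 'o \<Rightarrow> 'm \<Rightarrow> bool" where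
  "is_mono C A B f \<longleftrightarrow> (\<forall>X\<in>Obj C. \<forall>g\<in>Hom C X A. \<forall>h\<in>Hom C X A.
      Comp C X A B f g = Comp C X A B f h \<longrightarrow> g = h)"

definition is_epi :: "('o, 'm) acat \<Rightarrow> 'o \<Rightarrow> 'o \<Rightarrow> 'm \<Rightarrow> bool" where
  "is_epi C A B f \<longleftrightarrow> (\<forall>X\<in>Obj C. \<forall>g\<in>Hom C B X. \<forall>h\<in>Hom C B X.
      Comp C A B X g f = Comp C A B X h f \<longrightarrow> g = h)"

definition abelian_cat :: "('o, 'm) acat \<Rightarrow> bool" where
  "abelian_cat C \<longleftrightarrow> is_category C \<and> is_preadditive C \<and>
     (\<exists>Z. is_zero_obj C Z) \<and> has_biproducts C \<and>
     (\<forall>A\<in>Obj C. \<forall>B\<in>Obj C. \<forall>f\<in>Hom C A B.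
        (\<exists>K k. is_kernel C A B f K k) \<and> (\<exists>Q q. is_cokernel C A B f Q q)) \<and>
     (\<forall>A\<in>Obj C. \<forall>B\<in>Obj C. \<forall>f\<in>Hom C A B.
        is_mono C A B f \<longrightarrow> (\<exists>D\<in>Obj C. \<exists>g\<in>Hom C B D. is_kernel C B D g A f)) \<and>
     (\<forall>A\<in>Obj C. \<forall>B\<in>Obj C. \<forall>f\<in>Hom C A B.
        is_epi C A B f \<longrightarrow> (\<exists>D\<in>Obj C. \<exists>g\<in>Hom C D A. is_cokernel C D A g B f))"

definition short_exact :: "('o, 'm) acat \<Rightarrow> 'o \<Rightarrow> 'o \<Rightarrow> 'o \<Rightarrow> 'm \<Rightarrow> 'm \<Rightarrow> bool" where
  "short_exact C A B D f g \<longleftrightarrow> A \<in> Obj C \<and> B \<in> Obj C \<and> D \<in> Obj C \<and>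
     f \<in> Hom C A B \<and> g \<in> Hom C B D \<and>
     is_kernel C B D g A f \<and> is_cokernel C A B f D g"

definition amplitude :: "('o, 'm) acat \<Rightarrow> ('o \<Rightarrow> ennreal) \<Rightarrow> bool" where
  "amplitude C \<alpha> \<longleftrightarrow>
     (\<forall>Z. is_zero_obj C Z \<longrightarrow> \<alpha> Z = 0) \<and>
     (\<forall>A B D f g. short_exact C A B D f g \<longrightarrow>
        \<alpha> A \<le> \<alpha> B \<and> \<alpha> D \<le> \<alpha> B \<and> \<alpha> B \<le> \<alpha> A + \<alpha> D)"

text \<open>Chosen kernel / cokernel object of f : A -> B (well defined up to isomorphism;
  amplitudes are isomorphism invariant).\<close>
definition ker_obj :: "('o, 'm) acat \<Rightarrow> 'o \<Rightarrow> 'o \<Rightarrow> 'm \<Rightarrow> 'o" where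
  "ker_obj C A B f = (SOME K. \<exists>k. is_kernel C A B f K k)"

definition coker_obj :: "('o, 'm) acat \<Rightarrow> 'o \<Rightarrow> 'o \<Rightarrow> 'm \<Rightarrow> 'o" where
  "coker_obj C A B f = (SOME Q. \<exists>q. is_cokernel C A B f Q q)"

text \<open>A zigzag from A to B: a list of steps (gamma, d, X), going from the current
  object Y to X, where gamma : Y -> X if d, and gamma : X -> Y otherwise.\<close>
fun zigzag :: "('o, 'm) acat \<Rightarrow> 'o \<Rightarrow> 'o \<Rightarrow> ('m \<times> bool \<times> 'o) list \<Rightarrow> bool" where
  "zigzag C A B [] \<longleftrightarrow> A \<in> Obj C \<and> A = B"
| "zigzag C A B ((g, d, X) # zs) \<longleftrightarrow> A \<in> Obj C \<and> X \<in> Obj C \<and>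
     (if d then g \<in> Hom C A X else g \<in> Hom C X A) \<and> zigzag C X B zs"

fun zz_cost :: "('o, 'm) acat \<Rightarrow> ('o \<Rightarrow> ennreal) \<Rightarrow> 'o \<Rightarrow> ('m \<times> bool \<times> 'o) list \<Rightarrow> ennreal" where
  "zz_cost C \<alpha> A [] = 0"
| "zz_cost C \<alpha> A ((g, d, X) # zs) =
     (if d then \<alpha> (ker_obj C A X g) + \<alpha> (coker_obj C A X g)
      else \<alpha> (ker_obj C X A g) + \<alpha> (coker_obj C X A g)) + zz_cost C \<alpha> X zs"

definition path_metric :: "('o, 'm) acat \<Rightarrow> ('o \<Rightarrow> ennreal) \<Rightarrow> 'o \<Rightarrow> 'o \<Rightarrow> ennreal" where
  "path_metric C \<alpha> A B = (INF zs \<in> {zs. zigzag C A B zs}. zz_cost C \<alpha> A zs)"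

definition additive_functor ::
  "('o, 'm) acat \<Rightarrow> ('p, 'n) acat \<Rightarrow> ('o \<Rightarrow> 'p) \<Rightarrow> ('o \<Rightarrow> 'o \<Rightarrow> 'm \<Rightarrow> 'n) \<Rightarrow> bool" where
  "additive_functor C D Fo Fm \<longleftrightarrow>
     (\<forall>A\<in>Obj C. Fo A \<in> Obj D) \<and>
     (\<forall>A\<in>Obj C. \<forall>B\<in>Obj C. \<forall>f\<in>Hom C A B. Fm A B f \<in> Hom D (Fo A) (Fo B)) \<and>
     (\<forall>A\<in>Obj C. Fm A A (Idm C A) = Idm D (Fo A)) \<and>
     (\<forall>A\<in>Obj C. \<forall>B\<in>Obj C. \<forall>E\<in>Obj C. \<forall>f\<in>Hom C A B. \<forall>g\<in>Hom C B E.
        Fm A E (Comp C A B E g f) = Comp D (Fo A) (Fo B) (Fo E) (Fm B E g) (Fm A B f)) \<and>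
     (\<forall>A\<in>Obj C. \<forall>B\<in>Obj C. \<forall>f\<in>Hom C A B. \<forall>g\<in>Hom C A B.
        Fm A B (Add C A B f g) = Add D (Fo A) (Fo B) (Fm A B f) (Fm A B g))"

end

theory Submission
  imports Defs
begin

(* For f : Y -> X the image factorisation Y ->> im f >-> X together with the short exact
   sequence im f >-> X ->> coker f gives alpha X <= alpha Y + alpha (coker f), and dually
   alpha Y <= alpha X + alpha (ker f).  Summing along a zigzag, alpha A <= d(A, B) + alpha B.
   The zero morphism A -> 0 is a one-step zigzag of cost at most alpha A, hence d(A, 0) = alpha A.
   An additive functor preserves zero objects, so
   alpha'(F A) = d'(F A, F 0) <= K d(A, 0) = K alpha A. *)

definition opposite_cat :: "('o, 'm) acat \<Rightarrow> ('o, 'm) acat" where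
  "opposite_cat C =
     \<lparr>Obj = Obj C, Hom = (\<lambda>A B. Hom C B A), Comp = (\<lambda>A B D g f. Comp C D B A f g),
      Idm = Idm C, Add = (\<lambda>A B. Add C B A), Zro = (\<lambda>A B. Zro C B A)\<rparr>"

lemma opposite_cat_simps [simp]:
  "Obj (opposite_cat C) = Obj C"
  "Hom (opposite_cat C) A B = Hom C B A"
  "Comp (opposite_cat C) A B D g f = Comp C D B A f g"
  "Idm (opposite_cat C) = Idm C"
  "Add (opposite_cat C) A B = Add C B A"
  "Zro (opposite_cat C) A B = Zro C B A"
  by (simp_all add: opposite_cat_def)

lemma is_category_opposite: "is_category C \<Longrightarrow> is_category (opposite_cat C)"
  unfolding is_category_def by simp

lemma is_preadditive_opposite: "is_preadditive C \<Longrightarrow> is_preadditive (opposite_cat C)"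
  unfolding is_preadditive_def by simp metis

lemma is_zero_obj_opposite [simp]: "is_zero_obj (opposite_cat C) Z \<longleftrightarrow> is_zero_obj C Z"
  unfolding is_zero_obj_def by auto

lemma has_biproducts_opposite: "has_biproducts C \<Longrightarrow> has_biproducts (opposite_cat C)"
  unfolding has_biproducts_def by simp metis

lemma is_kernel_opposite [simp]:
  "is_kernel (opposite_cat C) A B f K k \<longleftrightarrow> is_cokernel C B A f K k"
  unfolding is_kernel_def is_cokernel_def by simp

lemma is_cokernel_opposite [simp]:
  "is_cokernel (opposite_cat C) A B f Q q \<longleftrightarrow> is_kernel C B A f Q q"
  unfolding is_kernel_def is_cokernel_def by simp

lemma is_mono_opposite [simp]: "is_mono (opposite_cat C) A B f \<longleftrightarrow> is_epi C B A f"
  unfolding is_mono_def is_epi_def by simp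

lemma is_epi_opposite [simp]: "is_epi (opposite_cat C) A B f \<longleftrightarrow> is_mono C B A f"
  unfolding is_mono_def is_epi_def by simp

lemma abelian_cat_opposite: "abelian_cat C \<Longrightarrow> abelian_cat (opposite_cat C)"
  unfolding abelian_cat_def is_kernel_opposite is_cokernel_opposite is_mono_opposite
    is_epi_opposite is_zero_obj_opposite
  using is_category_opposite is_preadditive_opposite has_biproducts_opposite by simp blast

lemma short_exact_opposite [simp]:
  "short_exact (opposite_cat C) A B D f g \<longleftrightarrow> short_exact C D B A g f"
  unfolding short_exact_def by auto

lemma amplitude_opposite: "amplitude C \<alpha> \<Longrightarrow> amplitude (opposite_cat C) \<alpha>"
  unfolding amplitude_def is_zero_obj_opposite short_exact_opposite by (metis add.commute)

lemma coker_obj_opposite [simp]: "coker_obj (opposite_cat C) A B f = ker_obj C B A f"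
  unfolding ker_obj_def coker_obj_def is_cokernel_opposite ..

lemma kernelD:
  assumes "is_kernel C A B f K k"
  shows "K \<in> Obj C" "k \<in> Hom C K A" "Comp C K A B f k = Zro C K B"
  using assms unfolding is_kernel_def by blast+

lemma kernel_factor:
  assumes "is_kernel C A B f K k" "X \<in> Obj C" "g \<in> Hom C X A" "Comp C X A B f g = Zro C X B"
  shows "\<exists>!u. u \<in> Hom C X K \<and> Comp C X K A k u = g"
  using assms unfolding is_kernel_def by blast

lemma cokernelD:
  assumes "is_cokernel C A B f Q q"
  shows "Q \<in> Obj C" "q \<in> Hom C B Q" "Comp C A B Q q f = Zro C A Q"
  using assms unfolding is_cokernel_def by blast+

lemma cokernel_factor:
  assumes "is_cokernel C A B f Q q" "X \<in> Obj C" "g \<in> Hom C B X" "Comp C A B X g f = Zro C A X"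
  shows "\<exists>!u. u \<in> Hom C Q X \<and> Comp C B Q X u q = g"
  using assms unfolding is_cokernel_def by blast

locale preadditive_category =
  fixes C :: "('o, 'm) acat"
  assumes category: "is_category C" and preadditive: "is_preadditive C"
begin

lemma comp_closed:
  "A \<in> Obj C \<Longrightarrow> B \<in> Obj C \<Longrightarrow> D \<in> Obj C \<Longrightarrow> f \<in> Hom C A B \<Longrightarrow> g \<in> Hom C B D \<Longrightarrow>
   Comp C A B D g f \<in> Hom C A D"
  using category unfolding is_category_def by simp

lemma id_closed: "A \<in> Obj C \<Longrightarrow> Idm C A \<in> Hom C A A"
  using category unfolding is_category_def by simp

lemma comp_id_left: "A \<in> Obj C \<Longrightarrow> B \<in> Obj C \<Longrightarrow> f \<in> Hom C A B \<Longrightarrow> Comp C A B B (Idm C B) f = f"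
  using category unfolding is_category_def by simp

lemma comp_id_right: "A \<in> Obj C \<Longrightarrow> B \<in> Obj C \<Longrightarrow> f \<in> Hom C A B \<Longrightarrow> Comp C A A B f (Idm C A) = f"
  using category unfolding is_category_def by simp

lemma comp_assoc:
  "A \<in> Obj C \<Longrightarrow> B \<in> Obj C \<Longrightarrow> D \<in> Obj C \<Longrightarrow> E \<in> Obj C \<Longrightarrow>
   f \<in> Hom C A B \<Longrightarrow> g \<in> Hom C B D \<Longrightarrow> h \<in> Hom C D E \<Longrightarrow>
   Comp C A D E h (Comp C A B D g f) = Comp C A B E (Comp C B D E h g) f"
  using category unfolding is_category_def by simp

lemma zero_closed: "A \<in> Obj C \<Longrightarrow> B \<in> Obj C \<Longrightarrow> Zro C A B \<in> Hom C A B"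
  using preadditive unfolding is_preadditive_def by simp

lemma add_closed:
  "A \<in> Obj C \<Longrightarrow> B \<in> Obj C \<Longrightarrow> f \<in> Hom C A B \<Longrightarrow> g \<in> Hom C A B \<Longrightarrow> Add C A B f g \<in> Hom C A B"
  using preadditive unfolding is_preadditive_def by simp

lemma add_assoc:
  "A \<in> Obj C \<Longrightarrow> B \<in> Obj C \<Longrightarrow> f \<in> Hom C A B \<Longrightarrow> g \<in> Hom C A B \<Longrightarrow> h \<in> Hom C A B \<Longrightarrow>
   Add C A B (Add C A B f g) h = Add C A B f (Add C A B g h)"
  using preadditive unfolding is_preadditive_def by blast

lemma add_commute:
  "A \<in> Obj C \<Longrightarrow> B \<in> Obj C \<Longrightarrow> f \<in> Hom C A B \<Longrightarrow> g \<in> Hom C A B \<Longrightarrow> Add C A B f g = Add C A B g f"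
  using preadditive unfolding is_preadditive_def by simp

lemma add_zero_right: "A \<in> Obj C \<Longrightarrow> B \<in> Obj C \<Longrightarrow> f \<in> Hom C A B \<Longrightarrow> Add C A B f (Zro C A B) = f"
  using preadditive unfolding is_preadditive_def by simp

lemma add_inverse_ex:
  "A \<in> Obj C \<Longrightarrow> B \<in> Obj C \<Longrightarrow> f \<in> Hom C A B \<Longrightarrow> \<exists>g\<in>Hom C A B. Add C A B f g = Zro C A B"
  using preadditive unfolding is_preadditive_def by blast

lemma comp_add_right:
  "A \<in> Obj C \<Longrightarrow> B \<in> Obj C \<Longrightarrow> D \<in> Obj C \<Longrightarrow> f \<in> Hom C A B \<Longrightarrow> f' \<in> Hom C A B \<Longrightarrow>
   g \<in> Hom C B D \<Longrightarrow> Comp C A B D g (Add C A B f f') = Add C A D (Comp C A B D g f) (Comp C A B D g f')"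
  using preadditive unfolding is_preadditive_def by simp

lemma comp_add_left:
  "A \<in> Obj C \<Longrightarrow> B \<in> Obj C \<Longrightarrow> D \<in> Obj C \<Longrightarrow> f \<in> Hom C A B \<Longrightarrow> g \<in> Hom C B D \<Longrightarrow>
   g' \<in> Hom C B D \<Longrightarrow> Comp C A B D (Add C B D g g') f = Add C A D (Comp C A B D g f) (Comp C A B D g' f)"
  using preadditive unfolding is_preadditive_def by simp

lemma add_self_eq_zero:
  assumes "A \<in> Obj C" "B \<in> Obj C" "x \<in> Hom C A B" "Add C A B x x = x"
  shows "x = Zro C A B"
proof -
  obtain n where n: "n \<in> Hom C A B" "Add C A B x n = Zro C A B"
    using add_inverse_ex assms by blast
  have "Zro C A B = Add C A B (Add C A B x x) n" using assms n by simp
  also have "\<dots> = Add C A B x (Add C A B x n)" using add_assoc[OF assms(1-3,3) n(1)] .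
  also have "\<dots> = x" using n add_zero_right assms by simp
  finally show ?thesis by simp
qed

lemma comp_zero_right:
  assumes "A \<in> Obj C" "B \<in> Obj C" "D \<in> Obj C" "g \<in> Hom C B D"
  shows "Comp C A B D g (Zro C A B) = Zro C A D"
proof (rule add_self_eq_zero)
  have z: "Zro C A B \<in> Hom C A B" using zero_closed assms by simp
  show "Comp C A B D g (Zro C A B) \<in> Hom C A D" using comp_closed z assms by simp
  have "Add C A B (Zro C A B) (Zro C A B) = Zro C A B" using add_zero_right[OF _ _ z] assms by simp
  then show "Add C A D (Comp C A B D g (Zro C A B)) (Comp C A B D g (Zro C A B)) = Comp C A B D g (Zro C A B)"
    using comp_add_right[OF _ _ _ z z] assms by simp
qed (use assms in auto)

lemma comp_zero_left:
  assumes "A \<in> Obj C" "B \<in> Obj C" "D \<in> Obj C" "f \<in> Hom C A B"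
  shows "Comp C A B D (Zro C B D) f = Zro C A D"
proof (rule add_self_eq_zero)
  have z: "Zro C B D \<in> Hom C B D" using zero_closed assms by simp
  show "Comp C A B D (Zro C B D) f \<in> Hom C A D" using comp_closed z assms by simp
  have "Add C B D (Zro C B D) (Zro C B D) = Zro C B D" using add_zero_right[OF _ _ z] assms by simp
  then show "Add C A D (Comp C A B D (Zro C B D) f) (Comp C A B D (Zro C B D) f) = Comp C A B D (Zro C B D) f"
    using comp_add_left[OF _ _ _ _ z z] assms by simp
qed (use assms in auto)

lemma zero_objI:
  assumes P: "P \<in> Obj C" and id_zero: "Idm C P = Zro C P P"
  shows "is_zero_obj C P"
  unfolding is_zero_obj_def
proof (intro conjI ballI P)
  fix X assume X: "X \<in> Obj C"
  have "a = Zro C P X" if a: "a \<in> Hom C P X" for a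
    using comp_id_right[OF P X a] comp_zero_right[OF P P X a] id_zero by simp
  then show "Hom C P X = {Zro C P X}" using zero_closed[OF P X] by blast
  have "a = Zro C X P" if a: "a \<in> Hom C X P" for a
    using comp_id_left[OF X P a] comp_zero_left[OF X P P a] id_zero by simp
  then show "Hom C X P = {Zro C X P}" using zero_closed[OF X P] by blast
qed

lemma kernel_is_mono:
  assumes A: "A \<in> Obj C" and B: "B \<in> Obj C" and f: "f \<in> Hom C A B"
    and ker: "is_kernel C A B f K k"
  shows "is_mono C K A k"
  unfolding is_mono_def
proof (intro ballI impI)
  fix X g h assume X: "X \<in> Obj C" and g: "g \<in> Hom C X K" and h: "h \<in> Hom C X K"
    and eq: "Comp C X K A k g = Comp C X K A k h"
  note K = kernelD[OF ker]
  have "Comp C X A B f (Comp C X K A k g) = Zro C X B"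
    using comp_assoc[OF X K(1) A B g K(2) f] comp_zero_left[OF X K(1) B g] K(3) by simp
  then have "\<exists>!u. u \<in> Hom C X K \<and> Comp C X K A k u = Comp C X K A k g"
    using kernel_factor[OF ker X] comp_closed[OF X K(1) A g K(2)] by simp
  then obtain u where "\<forall>v. v \<in> Hom C X K \<and> Comp C X K A k v = Comp C X K A k g \<longrightarrow> v = u"
    by (elim ex1E) blast
  then show "g = h" using g h eq by metis
qed

lemma mono_comp:
  assumes obj: "A \<in> Obj C" "B \<in> Obj C" "D \<in> Obj C" and f: "f \<in> Hom C A B" and g: "g \<in> Hom C B D"
    and mono: "is_mono C A B f" "is_mono C B D g"
  shows "is_mono C A D (Comp C A B D g f)"
  unfolding is_mono_def
proof (intro ballI impI)
  fix X a b assume X: "X \<in> Obj C" and a: "a \<in> Hom C X A" and b: "b \<in> Hom C X A"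
    and eq: "Comp C X A D (Comp C A B D g f) a = Comp C X A D (Comp C A B D g f) b"
  have "Comp C X B D g (Comp C X A B f a) = Comp C X B D g (Comp C X A B f b)"
    using eq comp_assoc[OF X obj a f g] comp_assoc[OF X obj b f g] by simp
  then have "Comp C X A B f a = Comp C X A B f b"
    using mono(2) X comp_closed[OF X obj(1,2) a f] comp_closed[OF X obj(1,2) b f]
    unfolding is_mono_def by blast
  then show "a = b" using mono(1) X a b unfolding is_mono_def by blast
qed

lemma epiI_zero:
  assumes Y: "Y \<in> Obj C" and I: "I \<in> Obj C" and u: "u \<in> Hom C Y I"
    and zero: "\<And>W d. W \<in> Obj C \<Longrightarrow> d \<in> Hom C I W \<Longrightarrow> Comp C Y I W d u = Zro C Y W \<Longrightarrow>
       d = Zro C I W"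
  shows "is_epi C Y I u"
  unfolding is_epi_def
proof (intro ballI impI)
  fix W d1 d2 assume W: "W \<in> Obj C" and d1: "d1 \<in> Hom C I W" and d2: "d2 \<in> Hom C I W"
    and eq: "Comp C Y I W d1 u = Comp C Y I W d2 u"
  obtain n where n: "n \<in> Hom C I W" "Add C I W d2 n = Zro C I W"
    using add_inverse_ex[OF I W d2] by blast
  have "Comp C Y I W (Add C I W d1 n) u = Comp C Y I W (Add C I W d2 n) u"
    using comp_add_left[OF Y I W u d1 n(1)] comp_add_left[OF Y I W u d2 n(1)] eq by simp
  also have "\<dots> = Zro C Y W" using n(2) comp_zero_left[OF Y I W u] by simp
  finally have difference_zero: "Add C I W d1 n = Zro C I W"
    using zero[OF W add_closed[OF I W d1 n(1)]] by simp
  have "d1 = Add C I W d1 (Add C I W n d2)"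
    using add_zero_right[OF I W d1] n(2) add_commute[OF I W d2 n(1)] by simp
  also have "\<dots> = Add C I W d2 (Zro C I W)"
    using add_assoc[OF I W d1 n(1) d2] difference_zero add_commute[OF I W d2 zero_closed[OF I W]]
    by simp
  also have "\<dots> = d2" using add_zero_right[OF I W d2] .
  finally show "d1 = d2" .
qed

end

locale abelian_category =
  fixes C :: "('o, 'm) acat"
  assumes abelian: "abelian_cat C"

sublocale abelian_category \<subseteq> preadditive_category
  using abelian unfolding abelian_cat_def by unfold_locales blast+

context abelian_category
begin

lemma opposite_abelian_category: "abelian_category (opposite_cat C)"
  using abelian_cat_opposite[OF abelian] by unfold_locales

lemma zero_obj_ex: "\<exists>Z. is_zero_obj C Z"
  using abelian unfolding abelian_cat_def by blast

lemma kernel_ex: "A \<in> Obj C \<Longrightarrow> B \<in> Obj C \<Longrightarrow> f \<in> Hom C A B \<Longrightarrow> \<exists>K k. is_kernel C A B f K k"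
  using abelian unfolding abelian_cat_def by blast

lemma cokernel_ex: "A \<in> Obj C \<Longrightarrow> B \<in> Obj C \<Longrightarrow> f \<in> Hom C A B \<Longrightarrow> \<exists>Q q. is_cokernel C A B f Q q"
  using abelian unfolding abelian_cat_def by blast

lemma mono_is_kernel:
  "A \<in> Obj C \<Longrightarrow> B \<in> Obj C \<Longrightarrow> f \<in> Hom C A B \<Longrightarrow> is_mono C A B f \<Longrightarrow>
   \<exists>D\<in>Obj C. \<exists>g\<in>Hom C B D. is_kernel C B D g A f"
  using abelian unfolding abelian_cat_def by blast

lemma epi_is_cokernel:
  "A \<in> Obj C \<Longrightarrow> B \<in> Obj C \<Longrightarrow> f \<in> Hom C A B \<Longrightarrow> is_epi C A B f \<Longrightarrow>
   \<exists>D\<in>Obj C. \<exists>g\<in>Hom C D A. is_cokernel C D A g B f"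
  using abelian unfolding abelian_cat_def by blast

lemma kernel_ker_obj:
  "A \<in> Obj C \<Longrightarrow> B \<in> Obj C \<Longrightarrow> f \<in> Hom C A B \<Longrightarrow> \<exists>k. is_kernel C A B f (ker_obj C A B f) k"
  unfolding ker_obj_def by (rule someI_ex) (rule kernel_ex)

lemma cokernel_coker_obj:
  "A \<in> Obj C \<Longrightarrow> B \<in> Obj C \<Longrightarrow> f \<in> Hom C A B \<Longrightarrow> \<exists>q. is_cokernel C A B f (coker_obj C A B f) q"
  unfolding coker_obj_def by (rule someI_ex) (rule cokernel_ex)

lemma cokernel_is_epi:
  assumes "A \<in> Obj C" "B \<in> Obj C" "f \<in> Hom C A B" "is_cokernel C A B f Q q"
  shows "is_epi C B Q q"
proof -
  interpret dual: abelian_category "opposite_cat C" by (rule opposite_abelian_category)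
  show ?thesis using dual.kernel_is_mono[of B A f Q q] assms by simp
qed

lemma short_exact_kernel_of_epi:
  assumes X: "X \<in> Obj C" and Q: "Q \<in> Obj C" and q: "q \<in> Hom C X Q" and epi: "is_epi C X Q q"
    and ker: "is_kernel C X Q q I i"
  shows "short_exact C I X Q i q"
proof -
  note I = kernelD[OF ker]
  obtain D g where D: "D \<in> Obj C" "g \<in> Hom C D X" and coker: "is_cokernel C D X g Q q"
    using epi_is_cokernel[OF X Q q epi] by blast
  obtain v where v: "v \<in> Hom C D I" "Comp C D I X i v = g"
    using kernel_factor[OF ker D] cokernelD(3)[OF coker] by blast
  have "is_cokernel C I X i Q q"
    unfolding is_cokernel_def
  proof (intro conjI ballI impI Q q I(3))
    fix W h assume W: "W \<in> Obj C" and h: "h \<in> Hom C X W" and hi: "Comp C I X W h i = Zro C I W"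
    have "Comp C D X W h g = Comp C D I W (Comp C I X W h i) v"
      using v comp_assoc[OF D(1) I(1) X W v(1) I(2) h] by simp
    also have "\<dots> = Zro C D W" using hi comp_zero_left[OF D(1) I(1) W v(1)] by simp
    finally show "\<exists>!u. u \<in> Hom C Q W \<and> Comp C X Q W u q = h"
      using cokernel_factor[OF coker W h] by blast
  qed
  then show ?thesis unfolding short_exact_def using I X Q q ker by blast
qed

lemma image_factors_through_mono:
  assumes Y: "Y \<in> Obj C" and X: "X \<in> Obj C" and M: "M \<in> Obj C" and f: "f \<in> Hom C Y X"
    and coker: "is_cokernel C Y X f Q q" and ker: "is_kernel C X Q q I i"
    and j: "j \<in> Hom C M X" and mono: "is_mono C M X j"
    and v: "v \<in> Hom C Y M" and factor: "Comp C Y M X j v = f"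
  shows "\<exists>w\<in>Hom C I M. Comp C I M X j w = i"
proof -
  note Q = cokernelD[OF coker] and I = kernelD[OF ker]
  obtain E g where E: "E \<in> Obj C" "g \<in> Hom C X E" and ker_g: "is_kernel C X E g M j"
    using mono_is_kernel[OF M X j mono] by blast
  have "Comp C Y X E g f = Comp C Y M E (Comp C M X E g j) v"
    using factor comp_assoc[OF Y M X E(1) v j E(2)] by simp
  also have "\<dots> = Zro C Y E"
    using kernelD(3)[OF ker_g] comp_zero_left[OF Y M E(1) v] by simp
  finally obtain t where t: "t \<in> Hom C Q E" "Comp C X Q E t q = g"
    using cokernel_factor[OF coker E] by blast
  have "Comp C I X E g i = Comp C I Q E t (Comp C I X Q q i)"
    using comp_assoc[OF I(1) X Q(1) E(1) I(2) Q(2) t(1)] t(2) by simp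
  also have "\<dots> = Zro C I E" using I(3) comp_zero_right[OF I(1) Q(1) E(1) t(1)] by simp
  finally show ?thesis using kernel_factor[OF ker_g I(1,2)] by blast
qed

lemma epi_onto_image:
  assumes Y: "Y \<in> Obj C" and X: "X \<in> Obj C" and f: "f \<in> Hom C Y X"
    and coker: "is_cokernel C Y X f Q q" and ker: "is_kernel C X Q q I i"
    and u: "u \<in> Hom C Y I" and factor: "Comp C Y I X i u = f"
  shows "is_epi C Y I u"
proof (rule epiI_zero[OF Y _ u])
  note Q = cokernelD[OF coker] and I = kernelD[OF ker]
  show "I \<in> Obj C" by (rule I(1))
  fix W d assume W: "W \<in> Obj C" and d: "d \<in> Hom C I W" and du: "Comp C Y I W d u = Zro C Y W"
  \<comment> \<open>f factors through the kernel m of d, hence so does i; as i is mono, m is split epi\<close>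
  obtain M m where ker_d: "is_kernel C I W d M m" using kernel_ex[OF I(1) W d] by blast
  note M = kernelD[OF ker_d]
  obtain v where v: "v \<in> Hom C Y M" "Comp C Y M I m v = u"
    using kernel_factor[OF ker_d Y u du] by blast
  define j where "j = Comp C M I X i m"
  have j: "j \<in> Hom C M X" using comp_closed[OF M(1) I(1) X M(2) I(2)] j_def by simp
  have mono_i: "is_mono C I X i" using kernel_is_mono[OF X Q(1,2) ker] .
  have "is_mono C M X j"
    using mono_comp[OF M(1) I(1) X M(2) I(2) kernel_is_mono[OF I(1) W d ker_d] mono_i] j_def by simp
  moreover have "Comp C Y M X j v = f"
    using factor v comp_assoc[OF Y M(1) I(1) X v(1) M(2) I(2)] j_def by simp
  ultimately obtain w where w: "w \<in> Hom C I M" "Comp C I M X j w = i"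
    using image_factors_through_mono[OF Y X M(1) f coker ker j _ v(1)] by blast
  have "Comp C I I X i (Comp C I M I m w) = Comp C I I X i (Idm C I)"
    using comp_assoc[OF I(1) M(1) I(1) X w(1) M(2) I(2)] w(2) j_def comp_id_right[OF I(1) X I(2)]
    by simp
  then have w_section: "Comp C I M I m w = Idm C I"
    using mono_i I(1) comp_closed[OF I(1) M(1) I(1) w(1) M(2)] id_closed[OF I(1)]
    unfolding is_mono_def by blast
  have "d = Comp C I I W d (Comp C I M I m w)" using w_section comp_id_right[OF I(1) W d] by simp
  also have "\<dots> = Comp C I M W (Comp C M I W d m) w" using comp_assoc[OF I(1) M(1) I(1) W w(1) M(2) d] .
  also have "\<dots> = Zro C I W" using M(3) comp_zero_left[OF I(1) M(1) W w(1)] by simp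
  finally show "d = Zro C I W" .
qed

end

locale amplitude_category = abelian_category +
  fixes \<alpha> :: "'o \<Rightarrow> ennreal"
  assumes amplitude: "amplitude C \<alpha>"
begin

lemma opposite_amplitude_category: "amplitude_category (opposite_cat C) \<alpha>"
  using opposite_abelian_category amplitude_opposite[OF amplitude]
  unfolding amplitude_category_def amplitude_category_axioms_def by blast

lemma amplitude_zero_obj: "is_zero_obj C Z \<Longrightarrow> \<alpha> Z = 0"
  using amplitude unfolding amplitude_def by blast

lemma amplitude_short_exact:
  "short_exact C A B D f g \<Longrightarrow> \<alpha> A \<le> \<alpha> B \<and> \<alpha> D \<le> \<alpha> B \<and> \<alpha> B \<le> \<alpha> A + \<alpha> D"
  using amplitude unfolding amplitude_def by blast

lemma amplitude_epi_le:
  assumes X: "X \<in> Obj C" and Q: "Q \<in> Obj C" and q: "q \<in> Hom C X Q" and epi: "is_epi C X Q q"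
  shows "\<alpha> Q \<le> \<alpha> X"
proof -
  obtain I i where "is_kernel C X Q q I i" using kernel_ex[OF X Q q] by blast
  then show ?thesis using amplitude_short_exact short_exact_kernel_of_epi[OF X Q q epi] by blast
qed

lemma amplitude_mono_le:
  assumes "I \<in> Obj C" "X \<in> Obj C" "i \<in> Hom C I X" "is_mono C I X i"
  shows "\<alpha> I \<le> \<alpha> X"
proof -
  interpret dual: amplitude_category "opposite_cat C" \<alpha> by (rule opposite_amplitude_category)
  show ?thesis using dual.amplitude_epi_le[of X I i] assms by simp
qed

lemma amplitude_ker_obj_le:
  assumes A: "A \<in> Obj C" and B: "B \<in> Obj C" and f: "f \<in> Hom C A B"
  shows "\<alpha> (ker_obj C A B f) \<le> \<alpha> A"
proof -
  obtain k where ker: "is_kernel C A B f (ker_obj C A B f) k" using kernel_ker_obj[OF A B f] ..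
  show ?thesis using amplitude_mono_le[OF kernelD(1)[OF ker] A kernelD(2)[OF ker] kernel_is_mono[OF A B f ker]] .
qed

lemma amplitude_coker_obj_le:
  assumes A: "A \<in> Obj C" and B: "B \<in> Obj C" and f: "f \<in> Hom C A B"
  shows "\<alpha> (coker_obj C A B f) \<le> \<alpha> B"
proof -
  obtain q where coker: "is_cokernel C A B f (coker_obj C A B f) q"
    using cokernel_coker_obj[OF A B f] ..
  show ?thesis using amplitude_epi_le[OF B cokernelD(1,2)[OF coker] cokernel_is_epi[OF A B f coker]] .
qed

lemma amplitude_codomain_le:
  assumes Y: "Y \<in> Obj C" and X: "X \<in> Obj C" and f: "f \<in> Hom C Y X"
  shows "\<alpha> X \<le> \<alpha> Y + \<alpha> (coker_obj C Y X f)"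
proof -
  obtain q where coker: "is_cokernel C Y X f (coker_obj C Y X f) q"
    using cokernel_coker_obj[OF Y X f] ..
  note Q = cokernelD[OF coker]
  obtain I i where ker: "is_kernel C X (coker_obj C Y X f) q I i" using kernel_ex[OF X Q(1,2)] by blast
  note I = kernelD[OF ker]
  have "short_exact C I X (coker_obj C Y X f) i q"
    using short_exact_kernel_of_epi[OF X Q(1,2) cokernel_is_epi[OF Y X f coker] ker] .
  then have "\<alpha> X \<le> \<alpha> I + \<alpha> (coker_obj C Y X f)" using amplitude_short_exact by blast
  moreover obtain u where u: "u \<in> Hom C Y I" "Comp C Y I X i u = f"
    using kernel_factor[OF ker Y f Q(3)] by blast
  then have "\<alpha> I \<le> \<alpha> Y" using amplitude_epi_le[OF Y I(1) u(1) epi_onto_image[OF Y X f coker ker u]] by simp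
  ultimately show ?thesis by (meson add_right_mono order_trans)
qed

lemma amplitude_domain_le:
  assumes "Y \<in> Obj C" "X \<in> Obj C" "f \<in> Hom C Y X"
  shows "\<alpha> Y \<le> \<alpha> X + \<alpha> (ker_obj C Y X f)"
proof -
  interpret dual: amplitude_category "opposite_cat C" \<alpha> by (rule opposite_amplitude_category)
  show ?thesis using dual.amplitude_codomain_le[of X Y f] assms by simp
qed

lemma amplitude_le_zz_cost: "zigzag C A B zs \<Longrightarrow> \<alpha> A \<le> zz_cost C \<alpha> A zs + \<alpha> B"
proof (induction zs arbitrary: A)
  case Nil
  then show ?case by simp
next
  case (Cons step zs)
  obtain g d X where step: "step = (g, d, X)" by (cases step) auto
  have A: "A \<in> Obj C" and X: "X \<in> Obj C" and rest: "zigzag C X B zs"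
    and g: "if d then g \<in> Hom C A X else g \<in> Hom C X A"
    using Cons.prems step by auto
  define c where "c = (if d then \<alpha> (ker_obj C A X g) + \<alpha> (coker_obj C A X g)
                        else \<alpha> (ker_obj C X A g) + \<alpha> (coker_obj C X A g))"
  have "\<alpha> A \<le> \<alpha> X + c"
  proof (cases d)
    case True
    have "\<alpha> A \<le> \<alpha> X + \<alpha> (ker_obj C A X g)" using amplitude_domain_le[OF A X] g True by simp
    also have "\<dots> \<le> \<alpha> X + c" using True c_def by (simp add: add_left_mono)
    finally show ?thesis .
  next
    case False
    have "\<alpha> A \<le> \<alpha> X + \<alpha> (coker_obj C X A g)" using amplitude_codomain_le[OF X A] g False by simp
    also have "\<dots> \<le> \<alpha> X + c" using False c_def by (simp add: add_left_mono)
    finally show ?thesis .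
  qed
  also have "\<dots> \<le> (zz_cost C \<alpha> X zs + \<alpha> B) + c" using Cons.IH[OF rest] by (rule add_right_mono)
  also have "\<dots> = zz_cost C \<alpha> A (step # zs) + \<alpha> B" using step c_def by (simp add: ac_simps)
  finally show ?case .
qed

lemma amplitude_le_path_metric: "\<alpha> A \<le> path_metric C \<alpha> A B + \<alpha> B"
proof (cases "\<alpha> B = top")
  case False
  \<comment> \<open>the case split is needed because top - top = top in ennreal\<close>
  have "\<alpha> A - \<alpha> B \<le> path_metric C \<alpha> A B"
    unfolding path_metric_def
  proof (rule INF_greatest)
    fix zs assume "zs \<in> {zs. zigzag C A B zs}"
    then show "\<alpha> A - \<alpha> B \<le> zz_cost C \<alpha> A zs"
      using amplitude_le_zz_cost False by (simp add: ennreal_minus_le_iff add.commute)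
  qed
  then show ?thesis using False by (simp add: ennreal_minus_le_iff add.commute)
qed simp

lemma path_metric_zero_obj_le:
  assumes Z: "is_zero_obj C Z" and A: "A \<in> Obj C"
  shows "path_metric C \<alpha> A Z \<le> \<alpha> A"
proof -
  have Z_obj: "Z \<in> Obj C" using Z unfolding is_zero_obj_def by simp
  have zero: "Zro C A Z \<in> Hom C A Z" using zero_closed[OF A Z_obj] .
  have "path_metric C \<alpha> A Z \<le> zz_cost C \<alpha> A [(Zro C A Z, True, Z)]"
    unfolding path_metric_def using A Z_obj zero by (intro INF_lower) simp
  also have "\<dots> = \<alpha> (ker_obj C A Z (Zro C A Z)) + \<alpha> (coker_obj C A Z (Zro C A Z))" by simp
  also have "\<dots> \<le> \<alpha> A + \<alpha> Z"
    using amplitude_ker_obj_le[OF A Z_obj zero] amplitude_coker_obj_le[OF A Z_obj zero] by (rule add_mono)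
  finally show ?thesis using amplitude_zero_obj[OF Z] by simp
qed

end

lemma additive_functor_zero_obj:
  assumes C: "preadditive_category C" and D: "preadditive_category D"
    and F: "additive_functor C D Fo Fm" and Z: "is_zero_obj C Z"
  shows "is_zero_obj D (Fo Z)"
proof -
  interpret C: preadditive_category C by (rule C)
  interpret D: preadditive_category D by (rule D)
  have Z_obj: "Z \<in> Obj C" and Z_endo: "Hom C Z Z = {Zro C Z Z}"
    using Z unfolding is_zero_obj_def by simp_all
  have FZ: "Fo Z \<in> Obj D" using F Z_obj unfolding additive_functor_def by simp
  have zero: "Zro C Z Z \<in> Hom C Z Z" using Z_endo by simp
  have F_zero: "Fm Z Z (Zro C Z Z) \<in> Hom D (Fo Z) (Fo Z)"
    using F Z_obj zero unfolding additive_functor_def by simp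
  have "Idm C Z = Zro C Z Z" using C.id_closed[OF Z_obj] Z_endo by simp
  then have F_id: "Fm Z Z (Zro C Z Z) = Idm D (Fo Z)"
    using F Z_obj unfolding additive_functor_def by metis
  have "Add D (Fo Z) (Fo Z) (Fm Z Z (Zro C Z Z)) (Fm Z Z (Zro C Z Z)) = Fm Z Z (Zro C Z Z)"
    using F Z_obj zero C.add_zero_right[OF Z_obj Z_obj zero] unfolding additive_functor_def by metis
  then have "Fm Z Z (Zro C Z Z) = Zro D (Fo Z) (Fo Z)" using D.add_self_eq_zero[OF FZ FZ F_zero] by simp
  then show ?thesis using F_id D.zero_objI[OF FZ] by simp
qed

theorem mainTheorem9:
  fixes C :: "('o, 'm) acat" and D :: "('p, 'n) acat"
    and \<alpha> :: "'o \<Rightarrow> ennreal" and \<alpha>' :: "'p \<Rightarrow> ennreal"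
    and Fo :: "'o \<Rightarrow> 'p" and Fm :: "'o \<Rightarrow> 'o \<Rightarrow> 'm \<Rightarrow> 'n" and K :: real
  assumes "abelian_cat C" and "abelian_cat D"
    and "amplitude C \<alpha>" and "amplitude D \<alpha>'"
    and "additive_functor C D Fo Fm"
    and "K \<ge> 0"
    and "\<forall>A\<in>Obj C. \<forall>B\<in>Obj C.
           path_metric D \<alpha>' (Fo A) (Fo B) \<le> ennreal K * path_metric C \<alpha> A B"
  shows "\<forall>A\<in>Obj C. \<alpha>' (Fo A) \<le> ennreal K * \<alpha> A"
proof
  fix A assume A: "A \<in> Obj C"
  interpret C: amplitude_category C \<alpha> using assms(1,3) by unfold_locales
  interpret D: amplitude_category D \<alpha>' using assms(2,4) by unfold_locales
  obtain Z where Z: "is_zero_obj C Z" using C.zero_obj_ex ..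
  have FZ: "is_zero_obj D (Fo Z)"
    using additive_functor_zero_obj[OF C.preadditive_category_axioms D.preadditive_category_axioms
        assms(5) Z] .
  have "\<alpha>' (Fo A) \<le> path_metric D \<alpha>' (Fo A) (Fo Z)"
    using D.amplitude_le_path_metric[of "Fo A" "Fo Z"] D.amplitude_zero_obj[OF FZ] by simp
  also have "\<dots> \<le> ennreal K * path_metric C \<alpha> A Z"
    using assms(7) A Z unfolding is_zero_obj_def by blast
  also have "\<dots> \<le> ennreal K * \<alpha> A"
    using C.path_metric_zero_obj_le[OF Z A] by (rule mult_left_mono) simp
  finally show "\<alpha>' (Fo A) \<le> ennreal K * \<alpha> A" .
qed

end
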